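(* Let $p,q,r$ be idempotents in a unital ring $A$ with $p\perp r$ and $q\perp r$. If $\operatorname{sr}((p+r)A(q+r))=1$, then $\operatorname{sr}(pAq)=1$.
   Context: Idempotents $e,f$ are orthogonal, $e\perp f$, if $ef=fe=0$. For idempotents $p,q$ in a unital ring $A$, $\operatorname{sr}(pAq)=1$ means: whenever $a\in pAq$, $x\in qAp$, $b\in pAp$ satisfy $ax+b=p$, there exist $y\in pAq$, $z\in qAp$ with $(a+by)z=p$. *)

theory Defs
  imports Main
begin

definition idempotent :: "'a::ring_1 \<Rightarrow> bool" where
  "idempotent e \<longleftrightarrow> e * e = e"

definition orth :: "'a::ring_1 \<Rightarrow> 'a \<Rightarrow> bool" where
  "orth e f \<longleftrightarrow> e * f = 0 \<and> f * e = 0"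

definition corner :: "'a::ring_1 \<Rightarrow> 'a \<Rightarrow> 'a set" where
  "corner p q = {p * a * q | a. True}"

definition sr_one :: "'a::ring_1 \<Rightarrow> 'a \<Rightarrow> bool" where
  "sr_one p q \<longleftrightarrow>
     (\<forall>a\<in>corner p q. \<forall>x\<in>corner q p. \<forall>b\<in>corner p p.
        a * x + b = p \<longrightarrow>
        (\<exists>y\<in>corner p q. \<exists>z\<in>corner q p. (a + b * y) * z = p))"

end

theory Submission
  imports Defs
begin

text \<open>Enlarge the data by the orthogonal idempotent r, replacing a by a + r and x by
  x + r; the equation a x + b = p becomes (a + r)(x + r) + b = p + r. Stable rank one of the big
  corner yields y, z with (a + r + b y) z = p + r. Multiplying by r on the left shows r z = r, so
  (a + b y) z = p, and compressing to y' = p y q and z' = q z p solves the original problem.\<close>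

lemma idempotent_add_orth:
  assumes "idempotent p" and "idempotent r" and "orth p r"
  shows "idempotent (p + r)"
  using assms by (simp add: idempotent_def orth_def algebra_simps)

lemma mem_corner_iff:
  assumes "idempotent p" and "idempotent q"
  shows "x \<in> corner p q \<longleftrightarrow> p * x = x \<and> x * q = x"
proof
  assume "x \<in> corner p q"
  then obtain c where "x = p * c * q"
    by (auto simp: corner_def)
  with assms show "p * x = x \<and> x * q = x"
    by (metis idempotent_def mult.assoc)
next
  assume "p * x = x \<and> x * q = x"
  then have "x = p * x * q"
    by simp
  then show "x \<in> corner p q"
    by (auto simp: corner_def)
qed

lemma corner_subset_corner_add_orth:
  assumes "idempotent p" and "idempotent q" and "orth p r" and "orth q s"
  shows "corner p q \<subseteq> corner (p + r) (q + s)"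
proof
  fix x
  assume "x \<in> corner p q"
  then have px: "p * x = x" and xq: "x * q = x"
    using assms(1,2) by (simp_all add: mem_corner_iff)
  have "r * x = 0"
    using assms(3) by (metis px mult.assoc mult_zero_left orth_def)
  moreover have "x * s = 0"
    using assms(4) by (metis xq mult.assoc mult_zero_right orth_def)
  ultimately have "x = (p + r) * x * (q + s)"
    by (simp add: algebra_simps px xq)
  then show "x \<in> corner (p + r) (q + s)"
    by (auto simp: corner_def)
qed

lemma add_mem_corner:
  assumes "a \<in> corner p q" and "b \<in> corner p q"
  shows "a + b \<in> corner p q"
proof -
  obtain c d where "a = p * c * q" and "b = p * d * q"
    using assms by (auto simp: corner_def)
  then have "a + b = p * (c + d) * q"
    by (simp add: algebra_simps)
  then show ?thesis
    by (auto simp: corner_def)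
qed

lemma mem_corner_add_orth:
  assumes "idempotent r" and "orth p r" and "orth q r"
  shows "r \<in> corner (p + r) (q + r)"
proof -
  have "(p + r) * r * (q + r) = r"
    using assms by (simp add: idempotent_def orth_def algebra_simps)
  then show ?thesis
    unfolding corner_def by (auto intro!: exI[of _ r])
qed

lemma add_mem_corner_add_orth:
  assumes "idempotent p" and "idempotent q" and "idempotent r"
    and "orth p r" and "orth q r" and "a \<in> corner p q"
  shows "a + r \<in> corner (p + r) (q + r)"
  using assms corner_subset_corner_add_orth mem_corner_add_orth add_mem_corner by blast

lemma add_orth_equation:
  assumes "idempotent p" and "idempotent q" and "idempotent r"
    and "orth p r" and "orth q r"
    and "a \<in> corner p q" and "x \<in> corner q p" and "a * x + b = p"
  shows "(a + r) * (x + r) + b = p + r"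
proof -
  have "a * r = 0"
    using assms(1,2,5,6) by (metis mem_corner_iff mult.assoc mult_zero_right orth_def)
  moreover have "r * x = 0"
    using assms(1,2,5,7) by (metis mem_corner_iff mult.assoc mult_zero_left orth_def)
  ultimately show ?thesis
    using assms(3,8) by (simp add: idempotent_def algebra_simps)
qed

lemma compress_add_orth_solution:
  assumes "idempotent p" and "idempotent q" and "idempotent r"
    and "orth p r" and "orth q r"
    and "a \<in> corner p q" and "b \<in> corner p p" and "z \<in> corner (q + r) (p + r)"
    and sol: "(a + r + b * y) * z = p + r"
  shows "(a + b * (p * y * q)) * (q * z * p) = p"
proof -
  have pa: "p * a = a" and bp: "b * p = b" and pb: "p * b = b"
    using assms(1,2,6,7) by (simp_all add: mem_corner_iff)
  have qrz: "(q + r) * z = z"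
    using assms(1-5,8) by (simp add: mem_corner_iff idempotent_add_orth)
  have pp: "p * p = p" and qq: "q * q = q" and rr: "r * r = r" and rp: "r * p = 0"
    using assms(1-4) by (simp_all add: idempotent_def orth_def)
  have "r * a = 0" and "r * b = 0"
    using rp by (metis pa mult.assoc mult_zero_left, metis pb mult.assoc mult_zero_left)
  then have "r * (a + r + b * y) = r"
    by (simp add: distrib_left rr flip: mult.assoc)
  then have rz: "r * z = r"
    using sol by (metis distrib_left mult.assoc rp rr add_0_left)
  have "(a + b * y) * z = p"
    using sol rz by (simp add: algebra_simps)
  moreover have zp: "q * z * p = z * p"
    using qrz rz rp by (metis add_0_right distrib_right)
  moreover have "b * (p * y * q) * (q * z * p) = b * y * (z * p)"
    by (metis bp qq zp mult.assoc)
  ultimately show ?thesis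
    by (metis distrib_right mult.assoc pp zp)
qed

theorem lemma4:
  fixes p q r :: "'a::ring_1"
  assumes "idempotent p" and "idempotent q" and "idempotent r"
    and "orth p r" and "orth q r"
    and "sr_one (p + r) (q + r)"
  shows "sr_one p q"
  unfolding sr_one_def
proof (intro ballI impI)
  fix a x b
  assume a: "a \<in> corner p q" and x: "x \<in> corner q p" and b: "b \<in> corner p p"
    and "a * x + b = p"
  then have "(a + r) * (x + r) + b = p + r"
    using assms add_orth_equation by blast
  moreover have "a + r \<in> corner (p + r) (q + r)" and "x + r \<in> corner (q + r) (p + r)"
    using assms a x by (simp_all add: add_mem_corner_add_orth)
  moreover have "b \<in> corner (p + r) (p + r)"
    using assms b corner_subset_corner_add_orth by blast
  ultimately obtain y z where "z \<in> corner (q + r) (p + r)" and "(a + r + b * y) * z = p + r"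
    using assms(6) unfolding sr_one_def by blast
  then have "(a + b * (p * y * q)) * (q * z * p) = p"
    using assms a b by (simp add: compress_add_orth_solution)
  moreover have "p * y * q \<in> corner p q" and "q * z * p \<in> corner q p"
    by (auto simp: corner_def)
  ultimately show "\<exists>y\<in>corner p q. \<exists>z\<in>corner q p. (a + b * y) * z = p"
    by blast
qed

end
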